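(* Let $\Gamma$ be a single-player extensive-form game without absentmindedness. Then $$\mathrm{VoR}^{\mathrm{opt}}(\Gamma)\le\frac{u_1(\mathrm{opt}(\mathrm{pr}_1(\Gamma)))}{\max_{z\in\mathcal Z}\chi(z)u_1(z)}\le\max_{h\in\mathcal H_c}\beta(h),$$ where by convention $\max_{h\in\mathcal H_c}\beta(h)=1$ if $\mathcal H_c=\emptyset$.
   Context: A single-player extensive-form game consists of a finite rooted tree (nodes $\mathcal H$, leaves $\mathcal Z$, actions $A_h$); nonterminal nodes belong to Player 1 or to chance; $\mathcal H_c$ is the set of chance nodes, each with a fixed distribution $\mathbb P_c(\cdot\mid h)$ on $A_h$; Player 1 has utility $u_1:\mathcal Z\to\mathbb R_{\ge0}$ and a partition of its nodes into infosets with common action sets $A_I$. For a node $h$ with root-to-$h$ path $(h_0,\dots,h_{d-1})$ (excluding $h$), $\mathrm{obs}(h)=(i_k,I_k,a_k)_k$ lists the player at $h_k$ (1 or chance), its infoset and the action taken; $\mathrm{obs}_1(h)$ is the restriction to Player 1. The game has absentmindedness if some infoset appears more than once among the $I_k$ in $\mathrm{obs}(h)$ for some $h$. $\mathrm{pr}_1(\Gamma)$ has the same tree and utilities, each infoset partitioned into classes of $h\sim h'\iff\mathrm{obs}_1(h)=\mathrm{obs}_1(h')$. $u_1(\mathrm{opt}(\cdot))$ is the maximum expected utility over behavioral strategies; $\mathrm{VoR}^{\mathrm{opt}}(\Gamma)=u_1(\mathrm{opt}(\mathrm{pr}_1(\Gamma)))/u_1(\mathrm{opt}(\Gamma))$.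 Chance coefficient: $\chi(z)=\prod_{k:\,i_k=c}\mathbb P_c(a_k\mid h_k)$ over the chance nodes on the path to $z$ (and $\chi(z)=1$ if there are none). Branching factor: for $h\in\mathcal H_c$ and $a\in A_h$, let $H_{ha}$ be the set of chance nodes in the subtree rooted at the child of $h$ reached by $a$; $b_h(a)=1$ if $H_{ha}=\emptyset$, else $b_h(a)=\max_{h'\in H_{ha}}\beta(h')$; $\beta(h)=\sum_{a\in A_h}b_h(a)$ (defined recursively from the bottom of the tree). *)

theory Defs
  imports Complex_Main "HOL-Library.Sublist"
begin

text \<open>Nodes are histories (lists of actions
from the root); the tree is a finite prefix-closed set H of histories containing
the root [].\<close>

datatype player = P1 | Chance

definition acts :: "'a list set \<Rightarrow> 'a list \<Rightarrow> 'a set" where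
  "acts H h = {a. h @ [a] \<in> H}"

definition leaves :: "'a list set \<Rightarrow> 'a list set" where
  "leaves H = {h \<in> H. acts H h = {}}"

definition inner :: "'a list set \<Rightarrow> 'a list set" where
  "inner H = {h \<in> H. acts H h \<noteq> {}}"

definition chance_nodes :: "'a list set \<Rightarrow> ('a list \<Rightarrow> player) \<Rightarrow> 'a list set" where
  "chance_nodes H pl = {h \<in> inner H. pl h = Chance}"

definition p1_nodes :: "'a list set \<Rightarrow> ('a list \<Rightarrow> player) \<Rightarrow> 'a list set" where
  "p1_nodes H pl = {h \<in> inner H. pl h = P1}"

definition wf_game ::
  "'a list set \<Rightarrow> ('a list \<Rightarrow> player) \<Rightarrow> ('a list \<Rightarrow> 'i) \<Rightarrow> ('a list \<Rightarrow> 'a \<Rightarrow> real)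
   \<Rightarrow> ('a list \<Rightarrow> real) \<Rightarrow> bool" where
  "wf_game H pl iset pc u \<longleftrightarrow>
     finite H \<and> [] \<in> H \<and> (\<forall>h a. h @ [a] \<in> H \<longrightarrow> h \<in> H) \<and>
     (\<forall>h \<in> chance_nodes H pl. (\<forall>a \<in> acts H h. pc h a \<ge> 0) \<and> (\<Sum>a \<in> acts H h. pc h a) = 1) \<and>
     (\<forall>z \<in> leaves H. u z \<ge> 0) \<and>
     (\<forall>h \<in> p1_nodes H pl. \<forall>h' \<in> p1_nodes H pl. iset h = iset h' \<longrightarrow> acts H h = acts H h')"

definition strat ::
  "'a list set \<Rightarrow> ('a list \<Rightarrow> player) \<Rightarrow> ('a list \<Rightarrow> 'i) \<Rightarrow> ('i \<Rightarrow> 'a \<Rightarrow> real) \<Rightarrow> bool" where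
  "strat H pl iset \<sigma> \<longleftrightarrow>
     (\<forall>h \<in> p1_nodes H pl. (\<forall>a \<in> acts H h. \<sigma> (iset h) a \<ge> 0) \<and> (\<Sum>a \<in> acts H h. \<sigma> (iset h) a) = 1)"

definition reach ::
  "('a list \<Rightarrow> player) \<Rightarrow> ('a list \<Rightarrow> 'i) \<Rightarrow> ('a list \<Rightarrow> 'a \<Rightarrow> real) \<Rightarrow> ('i \<Rightarrow> 'a \<Rightarrow> real)
   \<Rightarrow> 'a list \<Rightarrow> real" where
  "reach pl iset pc \<sigma> h =
     (\<Prod>k<length h. if pl (take k h) = Chance then pc (take k h) (h ! k)
                     else \<sigma> (iset (take k h)) (h ! k))"

definition eu ::
  "'a list set \<Rightarrow> ('a list \<Rightarrow> player) \<Rightarrow> ('a list \<Rightarrow> 'i) \<Rightarrow> ('a list \<Rightarrow> 'a \<Rightarrow> real)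
   \<Rightarrow> ('a list \<Rightarrow> real) \<Rightarrow> ('i \<Rightarrow> 'a \<Rightarrow> real) \<Rightarrow> real" where
  "eu H pl iset pc u \<sigma> = (\<Sum>z \<in> leaves H. reach pl iset pc \<sigma> z * u z)"

definition opt_val ::
  "'a list set \<Rightarrow> ('a list \<Rightarrow> player) \<Rightarrow> ('a list \<Rightarrow> 'i) \<Rightarrow> ('a list \<Rightarrow> 'a \<Rightarrow> real)
   \<Rightarrow> ('a list \<Rightarrow> real) \<Rightarrow> real" where
  "opt_val H pl iset pc u = Sup (eu H pl iset pc u ` {\<sigma>. strat H pl iset \<sigma>})"

definition obs1 :: "('a list \<Rightarrow> player) \<Rightarrow> ('a list \<Rightarrow> 'i) \<Rightarrow> 'a list \<Rightarrow> ('i \<times> 'a) list" where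
  "obs1 pl iset h = map (\<lambda>k. (iset (take k h), h ! k)) (filter (\<lambda>k. pl (take k h) = P1) [0..<length h])"

text \<open>pr_1(Gamma): same tree; infosets refined by obs_1.\<close>
definition pr1_inf :: "('a list \<Rightarrow> player) \<Rightarrow> ('a list \<Rightarrow> 'i) \<Rightarrow> 'a list \<Rightarrow> 'i \<times> ('i \<times> 'a) list" where
  "pr1_inf pl iset h = (iset h, obs1 pl iset h)"

definition no_absentmindedness :: "'a list set \<Rightarrow> ('a list \<Rightarrow> player) \<Rightarrow> ('a list \<Rightarrow> 'i) \<Rightarrow> bool" where
  "no_absentmindedness H pl iset \<longleftrightarrow>
     (\<forall>h \<in> H. \<forall>k < length h. \<forall>l < length h.
        k \<noteq> l \<and> pl (take k h) = P1 \<and> pl (take l h) = P1 \<longrightarrow> iset (take k h) \<noteq> iset (take l h))"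

definition VoR_opt ::
  "'a list set \<Rightarrow> ('a list \<Rightarrow> player) \<Rightarrow> ('a list \<Rightarrow> 'i) \<Rightarrow> ('a list \<Rightarrow> 'a \<Rightarrow> real)
   \<Rightarrow> ('a list \<Rightarrow> real) \<Rightarrow> real" where
  "VoR_opt H pl iset pc u = opt_val H pl (pr1_inf pl iset) pc u / opt_val H pl iset pc u"

definition chi :: "('a list \<Rightarrow> player) \<Rightarrow> ('a list \<Rightarrow> 'a \<Rightarrow> real) \<Rightarrow> 'a list \<Rightarrow> real" where
  "chi pl pc z = (\<Prod>k \<in> {k. k < length z \<and> pl (take k z) = Chance}. pc (take k z) (z ! k))"

text \<open>Branching factor, computed by bottom-up recursion; the recursion is written with
an explicit fuel parameter n (each recursive call goes to a strictly deeper chance node).\<close>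
primrec beta_fuel :: "'a list set \<Rightarrow> ('a list \<Rightarrow> player) \<Rightarrow> nat \<Rightarrow> 'a list \<Rightarrow> nat" where
  "beta_fuel H pl 0 h = 0"
| "beta_fuel H pl (Suc n) h =
     (\<Sum>a \<in> acts H h.
        (let S = {h' \<in> chance_nodes H pl. prefix (h @ [a]) h'}
         in if S = {} then 1 else Max (beta_fuel H pl n ` S)))"

text \<open>Fuel card H suffices: all histories in H have length < card H for a prefix-closed H.\<close>
definition beta :: "'a list set \<Rightarrow> ('a list \<Rightarrow> player) \<Rightarrow> 'a list \<Rightarrow> nat" where
  "beta H pl h = beta_fuel H pl (card H) h"

definition max_beta :: "'a list set \<Rightarrow> ('a list \<Rightarrow> player) \<Rightarrow> nat" where
  "max_beta H pl = (if chance_nodes H pl = {} then 1 else Max (beta H pl ` chance_nodes H pl))"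

end

theory Submission
  imports Defs
begin

(* Let M = max chi(z) u(z) over the leaves z. Without absentmindedness every infoset occurs at
   most once on the path to a leaf z, so the pure strategy playing the actions of z at those
   infosets is well defined; it reaches z with probability chi(z), hence opt(Gamma) >= M.
   Conversely, for any assignment of infosets (in particular the one of pr_1(Gamma)) the expected
   utility of the subtree at h is at most B(h) M(h), where M(h) is the largest chance-weighted
   utility of a leaf below h and B(h) the largest beta of a chance node below h (1 if there is
   none). This follows by backward induction: a Player-1 node averages the bounds of its
   children, and B and M only decrease along the tree; at a chance node each child a contributes
   pc(h,a) B(ha) M(ha) <= B(ha) M(h), and the B(ha) sum to beta(h). *)

lemma neq_Chance_iff [simp]: "p \<noteq> Chance \<longleftrightarrow> p = P1"
  by (cases p) auto

definition infoset_consistent :: "'a list set \<Rightarrow> ('a list \<Rightarrow> player) \<Rightarrow> ('a list \<Rightarrow> 'i) \<Rightarrow> bool" where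
  "infoset_consistent H pl I \<longleftrightarrow>
     (\<forall>h \<in> p1_nodes H pl. \<forall>h' \<in> p1_nodes H pl. I h = I h' \<longrightarrow> acts H h = acts H h')"

lemma infoset_consistent_pr1_inf:
  "infoset_consistent H pl iset \<Longrightarrow> infoset_consistent H pl (pr1_inf pl iset)"
  unfolding infoset_consistent_def pr1_inf_def prod.inject by blast

lemma chi_eq_prod:
  "chi pl pc z = (\<Prod>k<length z. if pl (take k z) = Chance then pc (take k z) (z ! k) else 1)"
  by (simp add: chi_def prod.inter_filter[symmetric] lessThan_def)

lemma reach_pure_strategy_eq_chi:
  assumes "\<And>k. k < length z \<Longrightarrow> pl (take k z) = P1 \<Longrightarrow> c (I (take k z)) = z ! k"
  shows "reach pl I pc (\<lambda>i a. if a = c i then 1 else 0) z = chi pl pc z"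
proof -
  have "reach pl I pc (\<lambda>i a. if a = c i then 1 else 0) z
      = (\<Prod>k<length z. if pl (take k z) = Chance then pc (take k z) (z ! k) else 1)"
    unfolding reach_def using assms by (intro prod.cong) auto
  also have "\<dots> = chi pl pc z"
    by (simp add: chi_eq_prod)
  finally show ?thesis .
qed

\<comment> \<open>No infosets here: the bounds below hold for every infoset structure on the same tree.\<close>
locale game_tree =
  fixes H :: "'a list set" and pl :: "'a list \<Rightarrow> player" and pc :: "'a list \<Rightarrow> 'a \<Rightarrow> real"
    and u :: "'a list \<Rightarrow> real"
  assumes finite_H: "finite H" and root_in_H: "[] \<in> H"
    and snoc_in_H_imp: "\<And>h a. h @ [a] \<in> H \<Longrightarrow> h \<in> H"
    and pc_nonneg: "\<And>h a. h \<in> chance_nodes H pl \<Longrightarrow> a \<in> acts H h \<Longrightarrow> 0 \<le> pc h a"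
    and u_nonneg: "\<And>z. z \<in> leaves H \<Longrightarrow> 0 \<le> u z"

lemma wf_game_imp_game_tree: "wf_game H pl iset pc u \<Longrightarrow> game_tree H pl pc u"
  by unfold_locales (auto simp: wf_game_def)

lemma wf_game_imp_infoset_consistent: "wf_game H pl iset pc u \<Longrightarrow> infoset_consistent H pl iset"
  unfolding wf_game_def infoset_consistent_def by blast

context game_tree
begin

lemma append_in_H_imp: "h @ t \<in> H \<Longrightarrow> h \<in> H"
proof (induction t rule: rev_induct)
  case (snoc a t)
  then show ?case using snoc_in_H_imp[of "h @ t" a] by simp
qed simp

lemma prefix_in_H: "z \<in> H \<Longrightarrow> prefix h z \<Longrightarrow> h \<in> H"
  by (auto simp: prefix_def intro: append_in_H_imp)

lemma take_in_H: "z \<in> H \<Longrightarrow> take k z \<in> H"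
  using prefix_in_H take_is_prefix by blast

lemma length_less_card: "h \<in> H \<Longrightarrow> length h < card H"
proof -
  assume "h \<in> H"
  have "inj_on (\<lambda>k. take k h) {..length h}"
    by (rule inj_onI) (metis atMost_iff length_take min.absorb2)
  moreover have "(\<lambda>k. take k h) ` {..length h} \<subseteq> H"
    using take_in_H \<open>h \<in> H\<close> by auto
  ultimately have "card {..length h} \<le> card H"
    using card_mono[OF finite_H] card_image by metis
  then show ?thesis by simp
qed

lemma depth_induct [consumes 1, case_names deeper]:
  assumes "h \<in> H"
    and "\<And>h. h \<in> H \<Longrightarrow> (\<And>h'. h' \<in> H \<Longrightarrow> length h < length h' \<Longrightarrow> P h') \<Longrightarrow> P h"
  shows "P h"
  using assms(1)
proof (induction h rule: measure_induct_rule[of "\<lambda>h. card H - length h"])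
  case (less h)
  show ?case
  proof (rule assms(2)[OF less.prems])
    fix h' assume "h' \<in> H" "length h < length h'"
    then have "card H - length h' < card H - length h"
      using length_less_card[of h'] by linarith
    then show "P h'" using less.IH \<open>h' \<in> H\<close> by blast
  qed
qed

lemma finite_acts: "finite (acts H h)"
proof -
  have "acts H h = (\<lambda>a. h @ [a]) -` H" by (auto simp: acts_def)
  then show ?thesis using finite_vimageI[OF finite_H, of "\<lambda>a. h @ [a]"] by (simp add: inj_def)
qed

lemma nth_in_acts: "z \<in> H \<Longrightarrow> k < length z \<Longrightarrow> z ! k \<in> acts H (take k z)"
  by (simp add: acts_def take_in_H flip: take_Suc_conv_app_nth)

lemma take_in_inner: "z \<in> H \<Longrightarrow> k < length z \<Longrightarrow> take k z \<in> inner H"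
  using nth_in_acts[of z k] take_in_H[of z k] by (auto simp: inner_def)

definition move_prob :: "('a list \<Rightarrow> 'a \<Rightarrow> real) \<Rightarrow> 'a list \<Rightarrow> 'a \<Rightarrow> real" where
  "move_prob \<tau> h a = (if pl h = Chance then pc h a else \<tau> h a)"

definition reach_from :: "('a list \<Rightarrow> 'a \<Rightarrow> real) \<Rightarrow> 'a list \<Rightarrow> 'a list \<Rightarrow> real" where
  "reach_from \<tau> h z = (\<Prod>k \<in> {length h..<length z}. move_prob \<tau> (take k z) (z ! k))"

abbreviation chance_reach :: "'a list \<Rightarrow> 'a list \<Rightarrow> real" where
  "chance_reach \<equiv> reach_from (\<lambda>_ _. 1)"

definition subtree_leaves :: "'a list \<Rightarrow> 'a list set" where
  "subtree_leaves h = {z \<in> leaves H. prefix h z}"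

definition subtree_value :: "('a list \<Rightarrow> 'a \<Rightarrow> real) \<Rightarrow> 'a list \<Rightarrow> real" where
  "subtree_value \<tau> h = (\<Sum>z \<in> subtree_leaves h. reach_from \<tau> h z * u z)"

definition max_chance_utility :: "'a list \<Rightarrow> real" where
  "max_chance_utility h = Max ((\<lambda>z. chance_reach h z * u z) ` subtree_leaves h)"

\<comment> \<open>A strategy may depend on the whole history; one of any infoset structure I is \<open>\<lambda>h. \<sigma> (I h)\<close>.\<close>
definition behavioral :: "('a list \<Rightarrow> 'a \<Rightarrow> real) \<Rightarrow> bool" where
  "behavioral \<tau> \<longleftrightarrow>
     (\<forall>h \<in> p1_nodes H pl. (\<forall>a \<in> acts H h. 0 \<le> \<tau> h a) \<and> (\<Sum>a \<in> acts H h. \<tau> h a) = 1)"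

lemma move_prob_nonneg:
  assumes "\<And>h a. h \<in> p1_nodes H pl \<Longrightarrow> a \<in> acts H h \<Longrightarrow> 0 \<le> \<tau> h a"
    and "h \<in> inner H" and "a \<in> acts H h"
  shows "0 \<le> move_prob \<tau> h a"
  using assms pc_nonneg by (auto simp: move_prob_def chance_nodes_def p1_nodes_def)

lemma reach_from_nonneg:
  assumes "\<And>h a. h \<in> p1_nodes H pl \<Longrightarrow> a \<in> acts H h \<Longrightarrow> 0 \<le> \<tau> h a" and "z \<in> H"
  shows "0 \<le> reach_from \<tau> h z"
  unfolding reach_from_def
  by (intro prod_nonneg move_prob_nonneg assms take_in_inner nth_in_acts) auto

lemma reach_from_snoc:
  assumes "prefix (h @ [a]) z"
  shows "reach_from \<tau> h z = move_prob \<tau> h a * reach_from \<tau> (h @ [a]) z"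
proof -
  have "take (length h) z = h" "z ! length h = a" "length h < length z"
    using assms by (auto simp: prefix_def)
  then show ?thesis by (simp add: reach_from_def prod.atLeast_Suc_lessThan)
qed

lemma finite_subtree_leaves: "finite (subtree_leaves h)"
  using finite_H by (simp add: subtree_leaves_def leaves_def)

lemma subtree_leaves_nonempty: "h \<in> H \<Longrightarrow> subtree_leaves h \<noteq> {}"
proof (induction h rule: depth_induct)
  case (deeper h)
  show ?case
  proof (cases "h \<in> leaves H")
    case True
    then show ?thesis by (auto simp: subtree_leaves_def)
  next
    case False
    with deeper.hyps obtain a where a: "h @ [a] \<in> H" by (auto simp: leaves_def acts_def)
    with deeper.IH obtain z where "z \<in> subtree_leaves (h @ [a])" by fastforce
    then have "z \<in> subtree_leaves h" by (auto simp: subtree_leaves_def prefix_def)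
    then show ?thesis by blast
  qed
qed

lemma subtree_leaves_leaf:
  assumes "h \<in> leaves H"
  shows "subtree_leaves h = {h}"
proof -
  have "t = []" if "h @ t \<in> H" for t
  proof (cases t)
    case (Cons x t')
    then have "h @ [x] \<in> H" using that append_in_H_imp[of "h @ [x]" t'] by simp
    then show ?thesis using assms by (auto simp: leaves_def acts_def)
  qed
  then show ?thesis using assms by (auto simp: subtree_leaves_def leaves_def prefix_def)
qed

lemma subtree_leaf_extends_child:
  assumes "z \<in> subtree_leaves h" and "h \<notin> leaves H"
  shows "prefix (h @ [z ! length h]) z"
proof -
  obtain t where "z = h @ t" "z \<in> leaves H"
    using assms(1) by (auto simp: subtree_leaves_def prefix_def)
  moreover have "t \<noteq> []" using calculation assms(2) by auto
  ultimately show ?thesis by (auto simp: neq_Nil_conv)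
qed

lemma subtree_leaves_child:
  assumes "a \<in> acts H h"
  shows "{z \<in> subtree_leaves h. z ! length h = a} = subtree_leaves (h @ [a])"
proof -
  have "h \<notin> leaves H" using assms by (auto simp: leaves_def)
  then show ?thesis
    using subtree_leaf_extends_child
    by (fastforce simp: subtree_leaves_def prefix_def)
qed

lemma subtree_value_leaf: "h \<in> leaves H \<Longrightarrow> subtree_value \<tau> h = u h"
  by (simp add: subtree_value_def subtree_leaves_leaf reach_from_def)

lemma subtree_value_split:
  assumes "h \<in> inner H"
  shows "subtree_value \<tau> h = (\<Sum>a \<in> acts H h. move_prob \<tau> h a * subtree_value \<tau> (h @ [a]))"
proof -
  have leaf: "h \<notin> leaves H" using assms by (simp add: inner_def leaves_def)
  have next_act: "(\<lambda>z. z ! length h) ` subtree_leaves h \<subseteq> acts H h"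
    using subtree_leaf_extends_child[OF _ leaf]
    by (auto simp: acts_def subtree_leaves_def leaves_def intro: prefix_in_H)
  have "subtree_value \<tau> h
      = (\<Sum>a \<in> acts H h. \<Sum>z \<in> {z \<in> subtree_leaves h. z ! length h = a}. reach_from \<tau> h z * u z)"
    unfolding subtree_value_def
    using sum.group[OF finite_subtree_leaves finite_acts next_act, of "\<lambda>z. reach_from \<tau> h z * u z"]
    by simp
  also have "\<dots> = (\<Sum>a \<in> acts H h. \<Sum>z \<in> subtree_leaves (h @ [a]). reach_from \<tau> h z * u z)"
    by (simp add: subtree_leaves_child)
  also have "\<dots> = (\<Sum>a \<in> acts H h. \<Sum>z \<in> subtree_leaves (h @ [a]).
                      move_prob \<tau> h a * (reach_from \<tau> (h @ [a]) z * u z))"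
    by (intro sum.cong refl) (auto simp: subtree_leaves_def reach_from_snoc)
  also have "\<dots> = (\<Sum>a \<in> acts H h. move_prob \<tau> h a * subtree_value \<tau> (h @ [a]))"
    by (simp add: subtree_value_def sum_distrib_left)
  finally show ?thesis .
qed

lemma max_chance_utility_leaf: "h \<in> leaves H \<Longrightarrow> max_chance_utility h = u h"
  by (simp add: max_chance_utility_def subtree_leaves_leaf reach_from_def)

lemma max_chance_utility_nonneg:
  assumes "h \<in> H"
  shows "0 \<le> max_chance_utility h"
proof -
  obtain z where z: "z \<in> subtree_leaves h" using subtree_leaves_nonempty[OF assms] by blast
  then have "0 \<le> chance_reach h z * u z"
    by (intro mult_nonneg_nonneg reach_from_nonneg u_nonneg)
      (auto simp: subtree_leaves_def leaves_def)
  also have "\<dots> \<le> max_chance_utility h"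
    unfolding max_chance_utility_def using z finite_subtree_leaves by (intro Max_ge) auto
  finally show ?thesis .
qed

lemma max_chance_utility_child:
  assumes "a \<in> acts H h"
  shows "move_prob (\<lambda>_ _. 1) h a * max_chance_utility (h @ [a]) \<le> max_chance_utility h"
proof -
  have "h @ [a] \<in> H" using assms by (simp add: acts_def)
  then have "max_chance_utility (h @ [a])
      \<in> (\<lambda>z. chance_reach (h @ [a]) z * u z) ` subtree_leaves (h @ [a])"
    unfolding max_chance_utility_def
    by (intro Max_in finite_imageI finite_subtree_leaves) (simp add: subtree_leaves_nonempty)
  then obtain z where z: "z \<in> subtree_leaves (h @ [a])"
    and max: "max_chance_utility (h @ [a]) = chance_reach (h @ [a]) z * u z"
    by blast
  have "move_prob (\<lambda>_ _. 1) h a * max_chance_utility (h @ [a]) = chance_reach h z * u z"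
    using z reach_from_snoc[of h a z "\<lambda>_ _. 1"] by (simp add: max subtree_leaves_def)
  also have "\<dots> \<le> max_chance_utility h"
    unfolding max_chance_utility_def
    using z subtree_leaves_child[OF assms] finite_subtree_leaves by (intro Max_ge) auto
  finally show ?thesis .
qed

definition chance_nodes_below :: "'a list \<Rightarrow> 'a list set" where
  "chance_nodes_below h = {h' \<in> chance_nodes H pl. prefix h h'}"

definition max_beta_below :: "'a list \<Rightarrow> nat" where
  "max_beta_below h =
     (if chance_nodes_below h = {} then 1 else Max (beta H pl ` chance_nodes_below h))"

lemma chance_nodes_below_subset: "chance_nodes_below h \<subseteq> H"
  by (auto simp: chance_nodes_below_def chance_nodes_def inner_def)

lemma finite_chance_nodes_below: "finite (chance_nodes_below h)"
  using chance_nodes_below_subset finite_H by (rule finite_subset)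

lemma chance_nodes_below_snoc:
  "h' \<in> chance_nodes_below (h @ [a]) \<Longrightarrow> h' \<in> H \<and> length h < length h'"
  using chance_nodes_below_subset by (fastforce simp: chance_nodes_below_def prefix_def)

lemma beta_fuel_Suc:
  "beta_fuel H pl (Suc n) h
     = (\<Sum>a \<in> acts H h. if chance_nodes_below (h @ [a]) = {} then 1
                        else Max (beta_fuel H pl n ` chance_nodes_below (h @ [a])))"
  unfolding beta_fuel.simps Let_def chance_nodes_below_def ..

lemma beta_fuel_stable:
  "h \<in> H \<Longrightarrow> card H - length h \<le> n \<Longrightarrow> card H - length h \<le> m
    \<Longrightarrow> beta_fuel H pl n h = beta_fuel H pl m h"
proof (induction n arbitrary: h m)
  case 0
  then show ?case using length_less_card by fastforce
next
  case (Suc n)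
  then obtain m' where m: "m = Suc m'"
    using length_less_card[of h] by (cases m) auto
  have "beta_fuel H pl n h' = beta_fuel H pl m' h'" if "h' \<in> chance_nodes_below (h @ [a])" for a h'
    using chance_nodes_below_snoc[OF that] Suc by (intro Suc.IH) (auto simp: m)
  then show ?case
    unfolding m beta_fuel_Suc by (intro sum.cong if_cong refl arg_cong[where f = Max] image_cong) auto
qed

lemma beta_eq_sum: "beta H pl h = (\<Sum>a \<in> acts H h. max_beta_below (h @ [a]))"
proof -
  obtain n where n: "card H = Suc n"
    using length_less_card[OF root_in_H] by (cases "card H") auto
  have "beta_fuel H pl n h' = beta H pl h'" if "h' \<in> chance_nodes_below (h @ [a])" for a h'
    using chance_nodes_below_snoc[OF that] n unfolding beta_def by (intro beta_fuel_stable) auto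
  then show ?thesis
    unfolding beta_def n beta_fuel_Suc max_beta_below_def
    by (intro sum.cong if_cong refl arg_cong[where f = Max] image_cong) (auto simp: beta_def n)
qed

lemma beta_ge_1: "h \<in> H \<Longrightarrow> h \<in> chance_nodes H pl \<Longrightarrow> 1 \<le> beta H pl h"
proof (induction h rule: depth_induct)
  case (deeper h)
  then obtain a where a: "a \<in> acts H h" by (auto simp: chance_nodes_def inner_def)
  have "1 \<le> max_beta_below (h @ [a])"
  proof (cases "chance_nodes_below (h @ [a]) = {}")
    case False
    then obtain h' where h': "h' \<in> chance_nodes_below (h @ [a])" by blast
    then have "1 \<le> beta H pl h'"
      using chance_nodes_below_snoc[OF h'] by (intro deeper.IH) (auto simp: chance_nodes_below_def)
    also have "\<dots> \<le> Max (beta H pl ` chance_nodes_below (h @ [a]))"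
      using h' finite_chance_nodes_below by (intro Max_ge) auto
    finally show ?thesis using False by (simp add: max_beta_below_def)
  qed (simp add: max_beta_below_def)
  also have "\<dots> \<le> beta H pl h"
    unfolding beta_eq_sum using a finite_acts by (intro member_le_sum) auto
  finally show ?case .
qed

lemma beta_le_max_beta_below: "h \<in> chance_nodes H pl \<Longrightarrow> beta H pl h \<le> max_beta_below h"
  using finite_chance_nodes_below
  by (auto simp: max_beta_below_def chance_nodes_below_def intro: Max_ge)

lemma max_beta_below_ge_1: "1 \<le> max_beta_below h"
proof (cases "chance_nodes_below h = {}")
  case False
  then obtain h' where h': "h' \<in> chance_nodes_below h" by blast
  then have "1 \<le> beta H pl h'"
    using chance_nodes_below_subset by (intro beta_ge_1) (auto simp: chance_nodes_below_def)
  also have "\<dots> \<le> Max (beta H pl ` chance_nodes_below h)"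
    using h' finite_chance_nodes_below by (intro Max_ge) auto
  finally show ?thesis using False by (simp add: max_beta_below_def)
qed (simp add: max_beta_below_def)

lemma max_beta_below_snoc_le: "max_beta_below (h @ [a]) \<le> max_beta_below h"
proof -
  have sub: "chance_nodes_below (h @ [a]) \<subseteq> chance_nodes_below h"
    by (auto simp: chance_nodes_below_def prefix_def)
  show ?thesis
  proof (cases "chance_nodes_below (h @ [a]) = {}")
    case True
    then show ?thesis using max_beta_below_ge_1[of h] by (simp add: max_beta_below_def)
  next
    case False
    with sub have "Max (beta H pl ` chance_nodes_below (h @ [a]))
        \<le> Max (beta H pl ` chance_nodes_below h)"
      using finite_chance_nodes_below by (intro Max_mono) auto
    with False sub show ?thesis by (auto simp: max_beta_below_def)
  qed
qed

lemma subtree_value_le_at_chance_node: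
  assumes h: "h \<in> chance_nodes H pl"
    and children: "\<And>a. a \<in> acts H h \<Longrightarrow>
      subtree_value \<tau> (h @ [a]) \<le> max_beta_below (h @ [a]) * max_chance_utility (h @ [a])"
  shows "subtree_value \<tau> h \<le> max_beta_below h * max_chance_utility h"
proof -
  have inner: "h \<in> inner H" and chance: "pl h = Chance"
    using h by (auto simp: chance_nodes_def)
  have "subtree_value \<tau> h = (\<Sum>a \<in> acts H h. pc h a * subtree_value \<tau> (h @ [a]))"
    using subtree_value_split[OF inner] chance by (simp add: move_prob_def)
  also have "\<dots> \<le> (\<Sum>a \<in> acts H h.
      max_beta_below (h @ [a]) * (pc h a * max_chance_utility (h @ [a])))"
  proof (intro sum_mono)
    fix a assume "a \<in> acts H h"
    then show "pc h a * subtree_value \<tau> (h @ [a])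
        \<le> max_beta_below (h @ [a]) * (pc h a * max_chance_utility (h @ [a]))"
      using children mult_left_mono pc_nonneg[OF h] by (fastforce simp: algebra_simps)
  qed
  also have "\<dots> \<le> (\<Sum>a \<in> acts H h. max_beta_below (h @ [a]) * max_chance_utility h)"
  proof (intro sum_mono mult_left_mono)
    fix a assume "a \<in> acts H h"
    then show "pc h a * max_chance_utility (h @ [a]) \<le> max_chance_utility h"
      using max_chance_utility_child chance by (fastforce simp: move_prob_def)
  qed simp
  also have "\<dots> = beta H pl h * max_chance_utility h"
    by (simp add: beta_eq_sum sum_distrib_right)
  also have "\<dots> \<le> max_beta_below h * max_chance_utility h"
    using beta_le_max_beta_below[OF h] max_chance_utility_nonneg inner
    by (intro mult_right_mono) (auto simp: inner_def)
  finally show ?thesis .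
qed

lemma subtree_value_le_at_p1_node:
  assumes \<tau>: "behavioral \<tau>" and h: "h \<in> p1_nodes H pl"
    and children: "\<And>a. a \<in> acts H h \<Longrightarrow>
      subtree_value \<tau> (h @ [a]) \<le> max_beta_below (h @ [a]) * max_chance_utility (h @ [a])"
  shows "subtree_value \<tau> h \<le> max_beta_below h * max_chance_utility h"
proof -
  have inner: "h \<in> inner H" and p1: "pl h = P1"
    using h by (auto simp: p1_nodes_def)
  have "subtree_value \<tau> h = (\<Sum>a \<in> acts H h. \<tau> h a * subtree_value \<tau> (h @ [a]))"
    using subtree_value_split[OF inner] p1 by (simp add: move_prob_def)
  also have "\<dots> \<le> (\<Sum>a \<in> acts H h. \<tau> h a * (max_beta_below h * max_chance_utility h))"
  proof (intro sum_mono mult_left_mono)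
    fix a assume a: "a \<in> acts H h"
    then have "h @ [a] \<in> H" by (simp add: acts_def)
    have "max_chance_utility (h @ [a]) \<le> max_chance_utility h"
      using max_chance_utility_child[OF a] p1 by (simp add: move_prob_def)
    then have "max_beta_below (h @ [a]) * max_chance_utility (h @ [a])
        \<le> max_beta_below h * max_chance_utility h"
      using max_beta_below_snoc_le max_chance_utility_nonneg[OF \<open>h @ [a] \<in> H\<close>]
      by (intro mult_mono) auto
    with children[OF a] show "subtree_value \<tau> (h @ [a]) \<le> max_beta_below h * max_chance_utility h"
      by linarith
    show "0 \<le> \<tau> h a" using \<tau> h a by (simp add: behavioral_def)
  qed
  also have "\<dots> = max_beta_below h * max_chance_utility h"
    using \<tau> h by (simp add: behavioral_def flip: sum_distrib_right)
  finally show ?thesis .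
qed

lemma subtree_value_le:
  assumes "behavioral \<tau>" and "h \<in> H"
  shows "subtree_value \<tau> h \<le> max_beta_below h * max_chance_utility h"
  using assms(2)
proof (induction h rule: depth_induct)
  case (deeper h)
  have children: "subtree_value \<tau> (h @ [a]) \<le> max_beta_below (h @ [a]) * max_chance_utility (h @ [a])"
    if "a \<in> acts H h" for a
    using that by (intro deeper.IH) (auto simp: acts_def)
  consider "h \<in> leaves H" | "h \<in> chance_nodes H pl" | "h \<in> p1_nodes H pl"
    using deeper.hyps by (cases "pl h") (auto simp: leaves_def chance_nodes_def p1_nodes_def inner_def)
  then show ?case
  proof cases
    case 1
    then have "u h \<le> max_beta_below h * u h"
      using max_beta_below_ge_1[of h] u_nonneg[of h] by (simp add: mult_le_cancel_right1)
    with 1 show ?thesis by (simp add: subtree_value_leaf max_chance_utility_leaf)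
  next
    case 2
    then show ?thesis using children by (rule subtree_value_le_at_chance_node)
  next
    case 3
    with assms(1) show ?thesis using children by (rule subtree_value_le_at_p1_node)
  qed
qed

lemma reach_eq_reach_from: "reach pl I pc \<sigma> z = reach_from (\<lambda>h. \<sigma> (I h)) [] z"
  unfolding reach_def reach_from_def move_prob_def by (simp add: atLeast0LessThan)

lemma eu_eq_subtree_value: "eu H pl I pc u \<sigma> = subtree_value (\<lambda>h. \<sigma> (I h)) []"
  by (simp add: eu_def subtree_value_def subtree_leaves_def reach_eq_reach_from)

lemma chi_eq_chance_reach: "chi pl pc z = chance_reach [] z"
  by (simp add: chi_eq_prod reach_from_def move_prob_def atLeast0LessThan)

lemma max_chance_utility_root: "max_chance_utility [] = (MAX z \<in> leaves H. chi pl pc z * u z)"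
  by (simp add: max_chance_utility_def subtree_leaves_def chi_eq_chance_reach)

lemma max_beta_below_root: "max_beta_below [] = max_beta H pl"
  by (simp add: max_beta_below_def max_beta_def chance_nodes_below_def)

lemma behavioral_strat: "strat H pl I \<sigma> \<Longrightarrow> behavioral (\<lambda>h. \<sigma> (I h))"
  unfolding strat_def behavioral_def by blast

lemma eu_le:
  "strat H pl I \<sigma> \<Longrightarrow> eu H pl I pc u \<sigma> \<le> max_beta H pl * (MAX z \<in> leaves H. chi pl pc z * u z)"
  using subtree_value_le[OF behavioral_strat root_in_H]
  by (simp add: eu_eq_subtree_value max_chance_utility_root max_beta_below_root)

lemma eu_nonneg: "strat H pl I \<sigma> \<Longrightarrow> 0 \<le> eu H pl I pc u \<sigma>"
  unfolding eu_def reach_eq_reach_from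
  by (intro sum_nonneg mult_nonneg_nonneg reach_from_nonneg u_nonneg)
    (auto simp: strat_def leaves_def)

lemma strat_pure:
  assumes "\<And>h. h \<in> p1_nodes H pl \<Longrightarrow> c (I h) \<in> acts H h"
  shows "strat H pl I (\<lambda>i a. if a = c i then 1 else 0)"
  using assms finite_acts by (simp add: strat_def)

lemma pure_choice_exists:
  assumes "infoset_consistent H pl I"
  shows "\<exists>c. \<forall>h \<in> p1_nodes H pl. c (I h) \<in> acts H h"
proof
  let ?c = "\<lambda>i. SOME a. a \<in> acts H (SOME h. h \<in> p1_nodes H pl \<and> I h = i)"
  show "\<forall>h \<in> p1_nodes H pl. ?c (I h) \<in> acts H h"
  proof
    fix h assume h: "h \<in> p1_nodes H pl"
    let ?h = "SOME h'. h' \<in> p1_nodes H pl \<and> I h' = I h"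
    have "?h \<in> p1_nodes H pl \<and> I ?h = I h"
      by (rule someI) (use h in blast)
    then have "acts H ?h = acts H h"
      using assms h unfolding infoset_consistent_def by blast
    moreover have "acts H h \<noteq> {}" using h by (simp add: p1_nodes_def inner_def)
    ultimately show "?c (I h) \<in> acts H h" by (simp add: some_in_eq)
  qed
qed

lemma pure_choice_along_history:
  assumes "infoset_consistent H pl I" and "no_absentmindedness H pl I" and "z \<in> H"
  shows "\<exists>c. (\<forall>h \<in> p1_nodes H pl. c (I h) \<in> acts H h)
           \<and> (\<forall>k < length z. pl (take k z) = P1 \<longrightarrow> c (I (take k z)) = z ! k)"
proof -
  obtain c0 where c0: "\<forall>h \<in> p1_nodes H pl. c0 (I h) \<in> acts H h"
    using pure_choice_exists[OF assms(1)] by blast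
  define visits where "visits i k \<longleftrightarrow> k < length z \<and> pl (take k z) = P1 \<and> I (take k z) = i" for i k
  define c where "c i = (if \<exists>k. visits i k then z ! (SOME k. visits i k) else c0 i)" for i
  have unique: "k' = k" if "visits i k" "visits i k'" for i k k'
    using that assms(2,3) unfolding visits_def no_absentmindedness_def by metis
  have "c (I h) \<in> acts H h" if h: "h \<in> p1_nodes H pl" for h
  proof (cases "\<exists>k. visits (I h) k")
    case True
    define k where "k = (SOME k. visits (I h) k)"
    have k: "visits (I h) k" unfolding k_def using True by (rule someI_ex)
    then have "take k z \<in> p1_nodes H pl" "I (take k z) = I h"
      using take_in_inner[OF assms(3)] by (simp_all add: visits_def p1_nodes_def)
    then have "acts H (take k z) = acts H h"
      using assms(1) h unfolding infoset_consistent_def by blast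
    moreover have "z ! k \<in> acts H (take k z)"
      using k nth_in_acts[OF assms(3)] by (simp add: visits_def)
    ultimately show ?thesis using True by (simp add: c_def k_def)
  qed (use c0 h in \<open>simp add: c_def\<close>)
  moreover have "c (I (take k z)) = z ! k" if "k < length z" "pl (take k z) = P1" for k
  proof -
    have k: "visits (I (take k z)) k" using that by (simp add: visits_def)
    then have "(SOME k'. visits (I (take k z)) k') = k"
      using unique someI[of "visits (I (take k z))"] by blast
    with k show ?thesis by (auto simp: c_def)
  qed
  ultimately show ?thesis by blast
qed

lemma strat_exists: "infoset_consistent H pl I \<Longrightarrow> \<exists>\<sigma>. strat H pl I \<sigma>"
  using pure_choice_exists strat_pure by metis

lemma opt_val_le:
  assumes "infoset_consistent H pl I"
  shows "opt_val H pl I pc u \<le> max_beta H pl * (MAX z \<in> leaves H. chi pl pc z * u z)"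
  unfolding opt_val_def using strat_exists[OF assms] eu_le by (intro cSup_least) auto

lemma eu_le_opt_val:
  assumes "strat H pl I \<sigma>"
  shows "eu H pl I pc u \<sigma> \<le> opt_val H pl I pc u"
proof -
  have "bdd_above (eu H pl I pc u ` {\<sigma>. strat H pl I \<sigma>})"
    using eu_le by (intro bdd_aboveI) blast
  then show ?thesis unfolding opt_val_def using assms by (intro cSup_upper) auto
qed

lemma opt_val_nonneg: "infoset_consistent H pl I \<Longrightarrow> 0 \<le> opt_val H pl I pc u"
  using strat_exists eu_nonneg eu_le_opt_val order_trans by metis


lemma max_chi_utility_le_opt_val:
  assumes "infoset_consistent H pl I" and "no_absentmindedness H pl I"
  shows "(MAX z \<in> leaves H. chi pl pc z * u z) \<le> opt_val H pl I pc u"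
proof -
  have fin: "finite (leaves H)" and "leaves H \<noteq> {}"
    using finite_subtree_leaves[of "[]"] subtree_leaves_nonempty[OF root_in_H]
    by (simp_all add: subtree_leaves_def)
  then have "(MAX z \<in> leaves H. chi pl pc z * u z) \<in> (\<lambda>z. chi pl pc z * u z) ` leaves H"
    by (intro Max_in finite_imageI) auto
  then obtain z where z: "z \<in> leaves H"
    and max: "(MAX z \<in> leaves H. chi pl pc z * u z) = chi pl pc z * u z"
    by blast
  then have "z \<in> H" by (simp add: leaves_def)
  then obtain c where c: "\<forall>h \<in> p1_nodes H pl. c (I h) \<in> acts H h"
    and along: "\<forall>k < length z. pl (take k z) = P1 \<longrightarrow> c (I (take k z)) = z ! k"
    using pure_choice_along_history[OF assms] by blast
  let ?\<sigma> = "\<lambda>i a. if a = c i then 1 else 0"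
  have \<sigma>: "strat H pl I ?\<sigma>" using c by (intro strat_pure) blast
  have "chi pl pc z * u z = reach pl I pc ?\<sigma> z * u z"
    using reach_pure_strategy_eq_chi along by metis
  also have "\<dots> \<le> eu H pl I pc u ?\<sigma>"
    unfolding eu_def using z fin
  proof (intro member_le_sum)
    fix z' assume "z' \<in> leaves H - {z}"
    then show "0 \<le> reach pl I pc ?\<sigma> z' * u z'"
      unfolding reach_eq_reach_from using behavioral_strat[OF \<sigma>]
      by (intro mult_nonneg_nonneg reach_from_nonneg u_nonneg) (auto simp: behavioral_def leaves_def)
  qed
  also have "\<dots> \<le> opt_val H pl I pc u" using \<sigma> by (rule eu_le_opt_val)
  finally show ?thesis using max by simp
qed

end

lemma ratio_bounds:
  fixes M V V' b :: real
  assumes "0 \<le> M" "0 \<le> b" "0 \<le> V'" "V' \<le> b * M" "M \<le> V" "V \<le> b * M"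
  shows "V' / V \<le> V' / M \<and> V' / M \<le> b"
proof (cases "M = 0")
  case True
  \<comment> \<open>then also V = 0, and all quotients are 0 since x / 0 = 0\<close>
  then show ?thesis using assms by simp
next
  case False
  with assms(1) have "0 < M" by simp
  then have "V' / V \<le> V' / M"
    using assms by (intro divide_left_mono) auto
  moreover have "V' / M \<le> b"
    using \<open>0 < M\<close> assms(4) by (simp add: pos_divide_le_eq)
  ultimately show ?thesis ..
qed

theorem proposition8:
  fixes H :: "'a list set" and pl :: "'a list \<Rightarrow> player" and iset :: "'a list \<Rightarrow> 'i"
    and pc :: "'a list \<Rightarrow> 'a \<Rightarrow> real" and u :: "'a list \<Rightarrow> real"
  assumes "wf_game H pl iset pc u"
    and "no_absentmindedness H pl iset"
  shows "VoR_opt H pl iset pc u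
           \<le> opt_val H pl (pr1_inf pl iset) pc u / (MAX z \<in> leaves H. chi pl pc z * u z)
       \<and> opt_val H pl (pr1_inf pl iset) pc u / (MAX z \<in> leaves H. chi pl pc z * u z)
           \<le> real (max_beta H pl)"
proof -
  interpret game_tree H pl pc u
    using assms(1) by (rule wf_game_imp_game_tree)
  have consistent: "infoset_consistent H pl iset"
    using assms(1) by (rule wf_game_imp_infoset_consistent)
  then have consistent_pr1: "infoset_consistent H pl (pr1_inf pl iset)"
    by (rule infoset_consistent_pr1_inf)
  have "0 \<le> (MAX z \<in> leaves H. chi pl pc z * u z)"
    using max_chance_utility_nonneg[OF root_in_H] by (simp add: max_chance_utility_root)
  then show ?thesis
    unfolding VoR_opt_def
    using opt_val_nonneg[OF consistent_pr1] opt_val_le[OF consistent_pr1]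
      max_chi_utility_le_opt_val[OF consistent assms(2)] opt_val_le[OF consistent]
    by (intro ratio_bounds) simp_all
qed

end
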